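(* Let $0<\alpha<1$ and $\beta=\alpha$. Then the essential norm of the generalized $\beta$-Ces\`aro operator $C_{g_\alpha}:\mathcal{B}_\alpha^0\to\mathcal{B}_\alpha^0$ is $0$.
   Context: $\mathbb{D}=\{z\in\mathbb{C}:|z|<1\}$. For $\alpha>0$, the $\alpha$-Bloch space $\mathcal{B}_\alpha$ is the space of analytic functions $f$ on $\mathbb{D}$ with $\|f\|_{\mathcal{B}_\alpha}:=\sup_{z\in\mathbb{D}}(1-|z|^2)^\alpha|f'(z)|<\infty$. $\mathcal{B}_\alpha^0=\{f\in\mathcal{B}_\alpha: f(0)=0\}$, normed by $\|\cdot\|_{\mathcal{B}_\alpha}$. For $\beta\in\mathbb{R}$, let $g_\beta(w)=\sum_{j=1}^k\frac{a_j}{(1-b_jw)^\beta}+h(w)$, where $k\ge1$, $b_1,\dots,b_k$ are distinct points of the unit circle, $a_j\in\mathbb{C}$ with $|a_j|>0$, $h$ is a bounded analytic function on $\mathbb{D}$, and powers are principal branches; $C_{g_\beta}(f)(z)=\int_0^z\frac{f(w)g_\beta(w)}{w}\,dw$. The essential norm of a bounded operator $T:X\to Y$ is $\|T\|_e=\inf\{\|T+K\|: K \text{ compact}\}$. *)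

theory Defs
  imports "HOL-Complex_Analysis.Complex_Analysis"
begin

definition bloch_norm :: "real \<Rightarrow> (complex \<Rightarrow> complex) \<Rightarrow> real" where
  "bloch_norm \<alpha> f = (SUP z\<in>ball 0 1. (1 - (cmod z)\<^sup>2) powr \<alpha> * cmod (deriv f z))"

definition bloch_space :: "real \<Rightarrow> (complex \<Rightarrow> complex) set" where
  "bloch_space \<alpha> = {f. f holomorphic_on ball 0 1 \<and>
      bdd_above ((\<lambda>z. (1 - (cmod z)\<^sup>2) powr \<alpha> * cmod (deriv f z)) ` ball 0 1)}"

definition bloch0 :: "real \<Rightarrow> (complex \<Rightarrow> complex) set" where
  "bloch0 \<alpha> = {f \<in> bloch_space \<alpha>. f 0 = 0}"

definition bloch0_linear :: "real \<Rightarrow> ((complex \<Rightarrow> complex) \<Rightarrow> (complex \<Rightarrow> complex)) \<Rightarrow> bool" where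
  "bloch0_linear \<alpha> T \<longleftrightarrow> (\<forall>f\<in>bloch0 \<alpha>. T f \<in> bloch0 \<alpha>) \<and>
     (\<forall>f\<in>bloch0 \<alpha>. \<forall>g\<in>bloch0 \<alpha>. \<forall>z\<in>ball 0 1. T (\<lambda>w. f w + g w) z = T f z + T g z) \<and>
     (\<forall>f\<in>bloch0 \<alpha>. \<forall>c. \<forall>z\<in>ball 0 1. T (\<lambda>w. c * f w) z = c * T f z)"

definition bloch0_bounded_op :: "real \<Rightarrow> ((complex \<Rightarrow> complex) \<Rightarrow> (complex \<Rightarrow> complex)) \<Rightarrow> bool" where
  "bloch0_bounded_op \<alpha> T \<longleftrightarrow> bloch0_linear \<alpha> T \<and>
     (\<exists>C. \<forall>f\<in>bloch0 \<alpha>. bloch_norm \<alpha> (T f) \<le> C * bloch_norm \<alpha> f)"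

text \<open>Compact operator: linear, and the image of the closed unit ball is relatively compact,
  i.e. every sequence in the unit ball has a subsequence whose images converge in norm.\<close>
definition bloch0_compact_op :: "real \<Rightarrow> ((complex \<Rightarrow> complex) \<Rightarrow> (complex \<Rightarrow> complex)) \<Rightarrow> bool" where
  "bloch0_compact_op \<alpha> K \<longleftrightarrow> bloch0_linear \<alpha> K \<and>
     (\<forall>f :: nat \<Rightarrow> complex \<Rightarrow> complex.
        (\<forall>n. f n \<in> bloch0 \<alpha> \<and> bloch_norm \<alpha> (f n) \<le> 1) \<longrightarrow>
        (\<exists>r g. strict_mono r \<and> g \<in> bloch0 \<alpha> \<and>
           (\<lambda>n. bloch_norm \<alpha> (\<lambda>z. K (f (r n)) z - g z)) \<longlonglongrightarrow> 0))"

definition bloch0_op_norm :: "real \<Rightarrow> ((complex \<Rightarrow> complex) \<Rightarrow> (complex \<Rightarrow> complex)) \<Rightarrow> real" where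
  "bloch0_op_norm \<alpha> T = (SUP f\<in>{f\<in>bloch0 \<alpha>. bloch_norm \<alpha> f \<le> 1}. bloch_norm \<alpha> (T f))"

definition bloch0_ess_norm :: "real \<Rightarrow> ((complex \<Rightarrow> complex) \<Rightarrow> (complex \<Rightarrow> complex)) \<Rightarrow> real" where
  "bloch0_ess_norm \<alpha> T = (INF K\<in>{K. bloch0_compact_op \<alpha> K}. bloch0_op_norm \<alpha> (\<lambda>f z. T f z + K f z))"

text \<open>The symbol g_beta, with principal branch powers (complex powr is principal).\<close>
definition g_sym :: "nat \<Rightarrow> (nat \<Rightarrow> complex) \<Rightarrow> (nat \<Rightarrow> complex) \<Rightarrow> (complex \<Rightarrow> complex) \<Rightarrow> real
    \<Rightarrow> complex \<Rightarrow> complex" where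
  "g_sym k a b h \<beta> w = (\<Sum>j<k. a j / (1 - b j * w) powr (complex_of_real \<beta>)) + h w"

definition cesaro_op :: "(complex \<Rightarrow> complex) \<Rightarrow> (complex \<Rightarrow> complex) \<Rightarrow> (complex \<Rightarrow> complex)" where
  "cesaro_op g f z = contour_integral (linepath 0 z) (\<lambda>w. f w * g w / w)"

end

(* For 0 < alpha < 1 the bound (1 - |z|^2)^alpha |f'(z)| <= ||f|| integrates along
   radii to the Hoelder estimate |f z - f (s z)| <= ||f|| (1 - s)^(1 - alpha) / (1 - alpha), and
   to |f z| <= ||f|| |z| / (1 - alpha) when f 0 = 0.  Since (C_g f)' = (f(z)/z) g(z) and every
   pole (1 - b_j z)^(-alpha) of g_alpha is compensated by the weight, the Bloch norm of C_g f is
   at most a constant times sup |f(z)/z|.  For a bounded sequence f_n the quotients f_n(z)/z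
   are uniformly bounded and share a radial modulus of continuity, so a Montel subsequence
   converges uniformly on the whole disc and C_g f_n converges in the Bloch norm.  Hence C_g is
   compact, and a compact T has essential norm 0 (take K = -T). *)
theory Submission
  imports Defs
begin

section \<open>Primitives and uniform limits on the disc\<close>

lemma convex_contour_primitive_has_field_derivative:
  assumes u: "u holomorphic_on S" and S: "convex S" "open S" "a \<in> S" and x: "x \<in> S"
  shows "((\<lambda>y. contour_integral (linepath a y) u) has_field_derivative u x) (at x)"
proof (rule triangle_contour_integrals_starlike_primitive[OF _ S(3,2) x])
  show "continuous_on S u"
    using u by (rule holomorphic_on_imp_continuous_on)
  show "closed_segment a y \<subseteq> S" if "y \<in> S" for y
    using S that by (simp add: closed_segment_subset)
  fix b c assume "closed_segment b c \<subseteq> S"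
  then have "convex hull {a, b, c} \<subseteq> S"
    using S by (intro hull_minimal) auto
  then have "(u has_contour_integral 0) (linepath a b +++ linepath b c +++ linepath c a)"
    by (intro Cauchy_theorem_triangle holomorphic_on_subset[OF u])
  then show "contour_integral (linepath a b) u + contour_integral (linepath b c) u
               + contour_integral (linepath c a) u = 0"
    by (rule has_chain_integral_chain_integral3)
qed

lemma disc_primitive_has_field_derivative:
  assumes "u holomorphic_on ball 0 1" "z \<in> ball 0 1"
  shows "((\<lambda>y. contour_integral (linepath 0 y) u) has_field_derivative u z) (at z)"
  using assms by (intro convex_contour_primitive_has_field_derivative) auto

lemma uniform_limit_on_disc_from_radial_modulus:
  fixes q :: "nat \<Rightarrow> complex \<Rightarrow> complex" and \<omega> :: "real \<Rightarrow> real"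
  assumes compact: "\<And>\<rho>. \<rho> < 1 \<Longrightarrow> uniform_limit (cball 0 \<rho>) q Q sequentially"
    and radial: "\<And>n z \<rho>. z \<in> ball 0 1 \<Longrightarrow> \<rho> < cmod z \<Longrightarrow> 1/2 \<le> \<rho> \<Longrightarrow> \<rho> < 1 \<Longrightarrow>
                   cmod (q n z - q n (of_real \<rho> * z)) \<le> \<omega> \<rho>"
    and radial_limit: "\<And>z \<rho>. z \<in> ball 0 1 \<Longrightarrow> \<rho> < cmod z \<Longrightarrow> 1/2 \<le> \<rho> \<Longrightarrow> \<rho> < 1 \<Longrightarrow>
                   cmod (Q z - Q (of_real \<rho> * z)) \<le> \<omega> \<rho>"
    and \<omega>: "(\<omega> \<longlongrightarrow> 0) (at_left 1)"
  shows "uniform_limit (ball 0 1) q Q sequentially"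
  unfolding uniform_limit_iff
proof (intro allI impI)
  fix e :: real assume e: "0 < e"
  have "\<forall>\<^sub>F \<rho> in at_left 1. \<omega> \<rho> < e / 4 \<and> \<rho> \<in> {1/2<..<1}"
    using order_tendstoD(2)[OF \<omega>, of "e / 4"] e eventually_at_left_real[of "1/2" 1]
    by (intro eventually_conj) auto
  then obtain \<rho> where \<rho>: "\<omega> \<rho> < e / 4" "1/2 < \<rho>" "\<rho> < 1"
    using eventually_happens'[of "at_left (1::real)"] by auto
  have "\<forall>\<^sub>F n in sequentially. \<forall>w\<in>cball 0 \<rho>. dist (q n w) (Q w) < e / 2"
    using compact[OF \<rho>(3)] e half_gt_zero unfolding uniform_limit_iff by blast
  then show "\<forall>\<^sub>F n in sequentially. \<forall>z\<in>ball 0 1. dist (q n z) (Q z) < e"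
  proof (rule eventually_mono, intro ballI)
    fix n z
    assume inner: "\<forall>w\<in>cball 0 \<rho>. dist (q n w) (Q w) < e / 2" and z: "z \<in> ball (0::complex) 1"
    show "dist (q n z) (Q z) < e"
    proof (cases "cmod z \<le> \<rho>")
      case True
      then have "dist (q n z) (Q z) < e / 2"
        using inner by simp
      then show ?thesis
        using e by simp
    next
      case False
      \<comment> \<open>pull \<open>z\<close> back radially to the compact disc \<open>cball 0 \<rho>\<close>\<close>
      define w where "w = of_real \<rho> * z"
      have "w \<in> cball 0 \<rho>"
        using \<rho> z by (simp add: w_def norm_mult mult_left_le_one_le)
      then have "cmod (q n w - Q w) < e / 2"
        using inner by (auto simp: dist_norm)
      moreover have "cmod (q n z - q n w) \<le> \<omega> \<rho>" "cmod (Q z - Q w) \<le> \<omega> \<rho>"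
        using radial[OF z] radial_limit[OF z] False \<rho> by (auto simp: w_def)
      moreover have "q n z - Q z = (q n z - q n w) + (q n w - Q w) - (Q z - Q w)"
        by simp
      then have "cmod (q n z - Q z) \<le> cmod (q n z - q n w) + cmod (q n w - Q w) + cmod (Q z - Q w)"
        by (metis norm_triangle_ineq norm_triangle_ineq4 add_right_mono order_trans)
      ultimately show ?thesis
        using \<rho> by (simp add: dist_norm)
    qed
  qed
qed

lemma uniformly_convergent_subseq_on_disc:
  fixes q :: "nat \<Rightarrow> complex \<Rightarrow> complex" and \<omega> :: "real \<Rightarrow> real"
  assumes hol: "\<And>n. q n holomorphic_on ball 0 1"
    and bound: "\<And>n z. z \<in> ball 0 1 \<Longrightarrow> cmod (q n z) \<le> M"
    and radial: "\<And>n z \<rho>. z \<in> ball 0 1 \<Longrightarrow> \<rho> < cmod z \<Longrightarrow> 1/2 \<le> \<rho> \<Longrightarrow> \<rho> < 1 \<Longrightarrow>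
                   cmod (q n z - q n (of_real \<rho> * z)) \<le> \<omega> \<rho>"
    and \<omega>: "(\<omega> \<longlongrightarrow> 0) (at_left 1)"
  obtains r Q where "strict_mono r" "Q holomorphic_on ball 0 1"
    "\<And>z. z \<in> ball 0 1 \<Longrightarrow> cmod (Q z) \<le> M"
    "uniform_limit (ball 0 1) (\<lambda>n. q (r n)) Q sequentially"
proof -
  define \<H> where "\<H> = {u. u holomorphic_on ball 0 1 \<and> (\<forall>z\<in>ball 0 1. cmod (u z) \<le> M)}"
  obtain Q r where Q: "Q holomorphic_on ball 0 1" and r: "strict_mono r"
    and pointwise: "\<And>z. z \<in> ball 0 1 \<Longrightarrow> (\<lambda>n. q (r n) z) \<longlonglongrightarrow> Q z"
    and compact: "\<And>K. compact K \<Longrightarrow> K \<subseteq> ball 0 1 \<Longrightarrow> uniform_limit K (q \<circ> r) Q sequentially"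
    by (rule Montel[of "ball 0 1" \<H> q]) (use hol bound in \<open>auto simp: \<H>_def intro!: exI[of _ M]\<close>)
  have Q_bound: "cmod (Q z) \<le> M" if "z \<in> ball 0 1" for z
    using that by (intro Lim_norm_ubound[OF _ pointwise]) (auto simp: bound)
  have Q_radial: "cmod (Q z - Q (of_real \<rho> * z)) \<le> \<omega> \<rho>"
    if z: "z \<in> ball 0 1" and \<rho>: "\<rho> < cmod z" "1/2 \<le> \<rho>" "\<rho> < 1" for z \<rho>
  proof -
    have "of_real \<rho> * z \<in> ball 0 1"
      using z \<rho> mult_left_le_one_le[of "cmod z" \<rho>] by (simp add: norm_mult)
    then show ?thesis
      using z by (intro Lim_norm_ubound[OF _ tendsto_diff[OF pointwise pointwise]])
                 (auto simp: radial[OF z \<rho>])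
  qed
  have "uniform_limit (cball 0 \<rho>) (\<lambda>n. q (r n)) Q sequentially" if "\<rho> < 1" for \<rho>
    using that compact[of "cball 0 \<rho>"] by (simp add: o_def subset_iff)
  then have "uniform_limit (ball 0 1) (\<lambda>n. q (r n)) Q sequentially"
    using radial Q_radial \<omega> by (rule uniform_limit_on_disc_from_radial_modulus)
  then show ?thesis
    using that r Q Q_bound by blast
qed

section \<open>The alpha-Bloch space\<close>

lemma bloch_norm_ge:
  assumes "f \<in> bloch_space \<alpha>" "z \<in> ball 0 1"
  shows "(1 - (cmod z)\<^sup>2) powr \<alpha> * cmod (deriv f z) \<le> bloch_norm \<alpha> f"
  using assms unfolding bloch_space_def bloch_norm_def by (auto intro: cSUP_upper)

lemma bloch_norm_nonneg: "f \<in> bloch_space \<alpha> \<Longrightarrow> 0 \<le> bloch_norm \<alpha> f"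
  using bloch_norm_ge[of f \<alpha> 0] by (smt (verit) centre_in_ball mult_nonneg_nonneg norm_ge_zero
      powr_ge_zero zero_less_one)

lemma bloch_space_holomorphic: "f \<in> bloch_space \<alpha> \<Longrightarrow> f holomorphic_on ball 0 1"
  unfolding bloch_space_def by auto

lemma bloch_spaceI:
  assumes "f holomorphic_on ball 0 1"
    and "\<And>z. z \<in> ball 0 1 \<Longrightarrow> (1 - (cmod z)\<^sup>2) powr \<alpha> * cmod (deriv f z) \<le> C"
  shows "f \<in> bloch_space \<alpha>"
  using assms unfolding bloch_space_def bdd_above_def by blast

lemma bloch_norm_le:
  assumes "\<And>z. z \<in> ball 0 1 \<Longrightarrow> (1 - (cmod z)\<^sup>2) powr \<alpha> * cmod (deriv f z) \<le> C"
  shows "bloch_norm \<alpha> f \<le> C"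
  unfolding bloch_norm_def by (rule cSUP_least) (use assms in auto)

lemma bloch_space_add:
  assumes "f \<in> bloch_space \<alpha>" "g \<in> bloch_space \<alpha>"
  shows "(\<lambda>z. f z + g z) \<in> bloch_space \<alpha>"
    and "bloch_norm \<alpha> (\<lambda>z. f z + g z) \<le> bloch_norm \<alpha> f + bloch_norm \<alpha> g"
proof -
  have hol: "f holomorphic_on ball 0 1" "g holomorphic_on ball 0 1"
    using assms by (auto intro: bloch_space_holomorphic)
  have "(1 - (cmod z)\<^sup>2) powr \<alpha> * cmod (deriv (\<lambda>z. f z + g z) z)
          \<le> bloch_norm \<alpha> f + bloch_norm \<alpha> g" if z: "z \<in> ball 0 1" for z
  proof -
    have "deriv (\<lambda>z. f z + g z) z = deriv f z + deriv g z"
      using hol z by (intro deriv_add) (auto intro: holomorphic_on_imp_differentiable_at)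
    then have "(1 - (cmod z)\<^sup>2) powr \<alpha> * cmod (deriv (\<lambda>z. f z + g z) z)
       \<le> (1 - (cmod z)\<^sup>2) powr \<alpha> * cmod (deriv f z) + (1 - (cmod z)\<^sup>2) powr \<alpha> * cmod (deriv g z)"
      by (simp add: distrib_left[symmetric] mult_left_mono norm_triangle_ineq)
    then show ?thesis
      using bloch_norm_ge[OF assms(1) z] bloch_norm_ge[OF assms(2) z] by simp
  qed
  then show "(\<lambda>z. f z + g z) \<in> bloch_space \<alpha>"
      and "bloch_norm \<alpha> (\<lambda>z. f z + g z) \<le> bloch_norm \<alpha> f + bloch_norm \<alpha> g"
    using hol by (auto intro!: bloch_spaceI bloch_norm_le holomorphic_intros)
qed

lemma bloch_norm_uminus:
  assumes "f holomorphic_on ball 0 1"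
  shows "bloch_norm \<alpha> (\<lambda>z. - f z) = bloch_norm \<alpha> f"
proof -
  have "deriv (\<lambda>z. - f z) z = - deriv f z" if "z \<in> ball 0 1" for z
    using assms that by (intro deriv_minus) (auto intro: holomorphic_on_imp_differentiable_at)
  then show ?thesis
    unfolding bloch_norm_def by (intro SUP_cong) auto
qed

lemma bloch_space_uminus:
  assumes "f \<in> bloch_space \<alpha>"
  shows "(\<lambda>z. - f z) \<in> bloch_space \<alpha>"
proof -
  have hol: "f holomorphic_on ball 0 1"
    using assms by (rule bloch_space_holomorphic)
  have "deriv (\<lambda>z. - f z) z = - deriv f z" if "z \<in> ball 0 1" for z
    using hol that by (intro deriv_minus) (auto intro: holomorphic_on_imp_differentiable_at)
  then show ?thesis
    using hol bloch_norm_ge[OF assms] by (auto intro!: bloch_spaceI holomorphic_intros)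
qed

lemma bloch_space_diff:
  assumes "f \<in> bloch_space \<alpha>" "g \<in> bloch_space \<alpha>"
  shows "(\<lambda>z. f z - g z) \<in> bloch_space \<alpha>"
  using bloch_space_add(1)[OF assms(1) bloch_space_uminus[OF assms(2)]] by simp

lemma bloch0_holomorphic: "f \<in> bloch0 \<alpha> \<Longrightarrow> f holomorphic_on ball 0 1"
  by (auto simp: bloch0_def bloch_space_def)

lemma bloch0_uminus: "f \<in> bloch0 \<alpha> \<Longrightarrow> (\<lambda>z. - f z) \<in> bloch0 \<alpha>"
  by (auto simp: bloch0_def intro: bloch_space_uminus)

lemma zero_in_bloch0: "(\<lambda>z. 0) \<in> bloch0 \<alpha>"
  unfolding bloch0_def bloch_space_def by auto

lemma bloch_norm_zero [simp]: "bloch_norm \<alpha> (\<lambda>z. 0) = 0"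
  unfolding bloch_norm_def by simp

lemma weighted_bound_nonneg:
  assumes "\<And>z. z \<in> ball 0 1 \<Longrightarrow> (1 - (cmod z)\<^sup>2) powr \<alpha> * cmod (G z) \<le> B"
  shows "0 \<le> B"
  using assms[of 0] by (smt (verit) centre_in_ball mult_nonneg_nonneg norm_ge_zero powr_ge_zero
      zero_less_one)

lemma bloch0_of_derivative_bound:
  assumes F': "\<And>z. z \<in> ball 0 1 \<Longrightarrow> (F has_field_derivative F' z) (at z)" and "F 0 = 0"
    and bound: "\<And>z. z \<in> ball 0 1 \<Longrightarrow> (1 - (cmod z)\<^sup>2) powr \<alpha> * cmod (F' z) \<le> C"
  shows "F \<in> bloch0 \<alpha>" "bloch_norm \<alpha> F \<le> C"
proof -
  have hol: "F holomorphic_on ball 0 1"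
    unfolding holomorphic_on_open[OF open_ball] using F' by blast
  have "(1 - (cmod z)\<^sup>2) powr \<alpha> * cmod (deriv F z) \<le> C" if "z \<in> ball 0 1" for z
    using bound[OF that] DERIV_imp_deriv[OF F'[OF that]] by simp
  then show "F \<in> bloch0 \<alpha>" "bloch_norm \<alpha> F \<le> C"
    using hol \<open>F 0 = 0\<close> bloch_spaceI[of F \<alpha> C] bloch_norm_le[of \<alpha> F C]
    by (auto simp: bloch0_def)
qed

lemma disc_primitive_bloch0:
  assumes u: "u holomorphic_on ball 0 1"
    and bound: "\<And>z. z \<in> ball 0 1 \<Longrightarrow> (1 - (cmod z)\<^sup>2) powr \<alpha> * cmod (u z) \<le> C"
  shows "(\<lambda>z. contour_integral (linepath 0 z) u) \<in> bloch0 \<alpha>"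
proof (rule bloch0_of_derivative_bound(1))
  show "((\<lambda>z. contour_integral (linepath 0 z) u) has_field_derivative u z) (at z)"
    if "z \<in> ball 0 1" for z
    using u that by (rule disc_primitive_has_field_derivative)
qed (use bound in auto)

section \<open>Radial Hoelder estimates\<close>

lemma self_le_powr:
  fixes u p :: real
  assumes "0 \<le> u" "u \<le> 1" "0 < p" "p \<le> 1"
  shows "u \<le> u powr p"
proof (cases "u = 0")
  case False
  then have "u powr 1 \<le> u powr p"
    using assms by (intro powr_mono') auto
  then show ?thesis
    using False assms by simp
qed simp

lemma powr_add_le:
  fixes x y p :: real
  assumes "0 \<le> x" "0 \<le> y" "0 < p" "p \<le> 1"
  shows "(x + y) powr p \<le> x powr p + y powr p"
proof (cases "x + y = 0")
  case True
  then show ?thesis using assms by simp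
next
  case False
  define S where "S = x + y"
  have S: "0 < S" using False assms by (simp add: S_def)
  have "S powr p * (u / S) \<le> u powr p" if "0 \<le> u" "u \<le> S" for u
  proof -
    have "S powr p * (u / S) \<le> S powr p * (u / S) powr p"
      using S that assms by (intro mult_left_mono self_le_powr) auto
    also have "\<dots> = u powr p"
      using S that by (simp add: powr_divide)
    finally show ?thesis .
  qed
  moreover have "S powr p * (x / S) + S powr p * (y / S) = S powr p"
    using S by (simp add: S_def add_divide_distrib[symmetric] distrib_left[symmetric])
  ultimately show ?thesis
    using assms by (smt (verit) S_def)
qed

lemma bloch_deriv_le:
  assumes f: "f \<in> bloch_space \<alpha>" and \<alpha>: "0 \<le> \<alpha>" and w: "w \<in> ball 0 1"
  shows "cmod (deriv f w) \<le> bloch_norm \<alpha> f * (1 - cmod w) powr (- \<alpha>)"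
proof -
  have "(1 - cmod w) powr \<alpha> * cmod (deriv f w) \<le> (1 - (cmod w)\<^sup>2) powr \<alpha> * cmod (deriv f w)"
    using w \<alpha> by (intro mult_right_mono powr_mono2) (auto simp: power2_eq_square mult_left_le_one_le)
  also have "\<dots> \<le> bloch_norm \<alpha> f"
    using f w by (rule bloch_norm_ge)
  finally show ?thesis
    using w by (simp add: powr_minus field_simps)
qed

lemma bloch_radial_increment:
  assumes f: "f \<in> bloch_space \<alpha>" and \<alpha>: "0 \<le> \<alpha>" "\<alpha> < 1"
    and z: "z \<in> ball 0 1" and s: "0 \<le> s" "s \<le> 1"
  shows "cmod (f z - f (of_real s * z))
           \<le> bloch_norm \<alpha> f / (1 - \<alpha>) * ((1 - s * cmod z) powr (1 - \<alpha>) - (1 - cmod z) powr (1 - \<alpha>))"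
proof (cases "s = 1")
  case False
  with s have s1: "s < 1" by simp
  define M where "M = bloch_norm \<alpha> f"
  define r where "r = cmod z"
  have r: "0 \<le> r" "r < 1" using z by (auto simp: r_def)
  have on_radius: "of_real t * z \<in> ball 0 1" "cmod (of_real t * z) = t * r" "0 < 1 - t * r"
    if "s \<le> t" "t \<le> 1" for t
  proof -
    show "cmod (of_real t * z) = t * r"
      using that s by (simp add: r_def norm_mult)
    moreover have "t * r \<le> r"
      using that s r by (simp add: mult_left_le_one_le)
    ultimately show "of_real t * z \<in> ball 0 1" "0 < 1 - t * r"
      using r by auto
  qed
  \<comment> \<open>compare \<open>f\<close> on the radius with the primitive \<open>\<phi>\<close> of the bound of \<open>bloch_deriv_le\<close>\<close>
  define F where "F = (\<lambda>t::real. f (of_real t * z))"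
  define F' where "F' = (\<lambda>t::real. z * deriv f (of_real t * z))"
  define \<phi> where "\<phi> = (\<lambda>t::real. - (M / (1 - \<alpha>)) * (1 - t * r) powr (1 - \<alpha>))"
  define \<phi>' where "\<phi>' = (\<lambda>t::real. M * r * (1 - t * r) powr (- \<alpha>))"
  have "continuous_on {s..1} F"
    unfolding F_def using on_radius
    by (intro continuous_on_compose2[OF holomorphic_on_imp_continuous_on[OF bloch_space_holomorphic[OF f]]])
       (auto intro!: continuous_intros)
  moreover have "continuous_on {s..1} \<phi>"
    unfolding \<phi>_def using on_radius(3) by (intro continuous_intros continuous_on_powr') force+
  moreover have "(F has_vector_derivative F' t) (at t)" if t: "s < t" "t < 1" for t
  proof -
    have "((\<lambda>t. of_real t * z) has_vector_derivative z) (at t)"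
      by (auto intro!: derivative_eq_intros simp: has_vector_derivative_def scaleR_conv_of_real)
    moreover have "(f has_field_derivative deriv f (of_real t * z)) (at (of_real t * z))"
      using on_radius[of t] t f by (auto intro!: holomorphic_derivI dest: bloch_space_holomorphic)
    ultimately show ?thesis
      unfolding F_def F'_def using field_vector_diff_chain_at[of "\<lambda>t. of_real t * z" z t f]
      by (simp add: o_def)
  qed
  moreover have "(\<phi> has_vector_derivative \<phi>' t) (at t)" if t: "s < t" "t < 1" for t
  proof -
    have "(\<phi> has_real_derivative - (M / (1 - \<alpha>)) * ((1 - \<alpha>) * (1 - t * r) powr (1 - \<alpha> - 1) * (- r))) (at t)"
      unfolding \<phi>_def using on_radius[of t] t by (auto intro!: derivative_eq_intros)
    moreover have "- (M / (1 - \<alpha>)) * ((1 - \<alpha>) * (1 - t * r) powr (1 - \<alpha> - 1) * (- r)) = \<phi>' t"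
      using \<alpha> by (simp add: \<phi>'_def field_simps)
    ultimately show ?thesis
      by (simp add: has_real_derivative_iff_has_vector_derivative)
  qed
  moreover have "norm (F' t) \<le> \<phi>' t" if t: "s < t" "t < 1" for t
  proof -
    have "cmod (deriv f (of_real t * z)) \<le> M * (1 - t * r) powr (- \<alpha>)"
      using bloch_deriv_le[OF f \<alpha>(1), of "of_real t * z"] on_radius[of t] t by (simp add: M_def)
    then show ?thesis
      unfolding F'_def \<phi>'_def using r
      by (simp add: norm_mult r_def[symmetric]) (metis mult.assoc mult.commute mult_left_mono)
  qed
  ultimately have "norm (F 1 - F s) \<le> \<phi> 1 - \<phi> s"
    by (intro differentiable_bound_general[OF s1, of F \<phi> F' \<phi>']) auto
  then show ?thesis
    by (simp add: F_def \<phi>_def r_def M_def algebra_simps)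
qed simp

lemma cmod_bloch0_le:
  assumes f: "f \<in> bloch0 \<alpha>" and \<alpha>: "0 < \<alpha>" "\<alpha> < 1" and z: "z \<in> ball 0 1"
  shows "cmod (f z) \<le> bloch_norm \<alpha> f / (1 - \<alpha>) * cmod z"
proof -
  have fB: "f \<in> bloch_space \<alpha>" and "f 0 = 0"
    using f by (auto simp: bloch0_def)
  then have "cmod (f z) \<le> bloch_norm \<alpha> f / (1 - \<alpha>) * (1 - (1 - cmod z) powr (1 - \<alpha>))"
    using bloch_radial_increment[OF fB _ \<alpha>(2) z, of 0] \<alpha> by simp
  also have "\<dots> \<le> bloch_norm \<alpha> f / (1 - \<alpha>) * cmod z"
    using self_le_powr[of "1 - cmod z" "1 - \<alpha>"] z \<alpha> bloch_norm_nonneg[OF fB]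
    by (intro mult_left_mono) auto
  finally show ?thesis .
qed

lemma bloch_radial_hoelder:
  assumes f: "f \<in> bloch_space \<alpha>" and \<alpha>: "0 < \<alpha>" "\<alpha> < 1"
    and z: "z \<in> ball 0 1" and s: "0 \<le> s" "s \<le> 1"
  shows "cmod (f z - f (of_real s * z)) \<le> bloch_norm \<alpha> f / (1 - \<alpha>) * (1 - s) powr (1 - \<alpha>)"
proof -
  define r where "r = cmod z"
  have r: "0 \<le> r" "r < 1" using z by (auto simp: r_def)
  \<comment> \<open>concavity of \<open>t powr (1 - \<alpha>)\<close>, in the form of subadditivity\<close>
  have "(1 - s * r) powr (1 - \<alpha>) = ((1 - r) + r * (1 - s)) powr (1 - \<alpha>)"
    by (simp add: algebra_simps)
  also have "\<dots> \<le> (1 - r) powr (1 - \<alpha>) + (r * (1 - s)) powr (1 - \<alpha>)"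
    using r s \<alpha> by (intro powr_add_le) auto
  also have "(r * (1 - s)) powr (1 - \<alpha>) \<le> (1 - s) powr (1 - \<alpha>)"
    using r s \<alpha> by (intro powr_mono2) (auto simp: mult_left_le_one_le)
  finally have "(1 - s * r) powr (1 - \<alpha>) - (1 - r) powr (1 - \<alpha>) \<le> (1 - s) powr (1 - \<alpha>)"
    by simp
  then show ?thesis
    using bloch_radial_increment[OF f _ \<alpha>(2) z s] \<alpha> bloch_norm_nonneg[OF f]
    by (smt (verit, best) divide_nonneg_pos mult_left_mono r_def)
qed

section \<open>The quotient f(z)/z\<close>

definition zquot :: "(complex \<Rightarrow> complex) \<Rightarrow> complex \<Rightarrow> complex" where
  "zquot f z = (if z = 0 then deriv f 0 else f z / z)"

lemma zquot_holomorphic: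
  assumes "f holomorphic_on ball 0 1" "f 0 = 0"
  shows "zquot f holomorphic_on ball 0 1"
proof -
  have "(\<lambda>z. if z = 0 then deriv f 0 else (f z - f 0) / (z - 0)) holomorphic_on ball 0 1"
    using assms(1) by (rule pole_lemma) (simp add: interior_open)
  moreover have "(\<lambda>z. if z = 0 then deriv f 0 else (f z - f 0) / (z - 0)) = zquot f"
    using assms(2) by (auto simp: zquot_def fun_eq_iff)
  ultimately show ?thesis by simp
qed

lemma cmod_zquot_le:
  assumes f: "f \<in> bloch0 \<alpha>" and \<alpha>: "0 < \<alpha>" "\<alpha> < 1" and z: "z \<in> ball 0 1"
  shows "cmod (zquot f z) \<le> bloch_norm \<alpha> f / (1 - \<alpha>)"
proof (cases "z = 0")
  case True
  have fB: "f \<in> bloch_space \<alpha>"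
    using f by (simp add: bloch0_def)
  have "cmod (deriv f 0) \<le> bloch_norm \<alpha> f"
    using bloch_norm_ge[OF fB, of 0] by simp
  also have "\<dots> \<le> bloch_norm \<alpha> f / (1 - \<alpha>)"
    using bloch_norm_nonneg[OF fB] \<alpha> by (simp add: le_divide_eq mult_left_le)
  finally show ?thesis
    using True by (simp add: zquot_def)
next
  case False
  then show ?thesis
    using cmod_bloch0_le[OF f \<alpha> z] by (simp add: zquot_def norm_divide divide_le_eq)
qed

lemma zquot_radial_estimate:
  assumes f: "f \<in> bloch0 \<alpha>" and \<alpha>: "0 < \<alpha>" "\<alpha> < 1"
    and z: "z \<in> ball 0 1" and \<rho>: "\<rho> < cmod z" "1/2 \<le> \<rho>" "\<rho> \<le> 1"
  shows "cmod (zquot f z - zquot f (of_real \<rho> * z)) \<le> 3 * (bloch_norm \<alpha> f / (1 - \<alpha>)) * (1 - \<rho>) powr (1 - \<alpha>)"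
proof -
  define K where "K = bloch_norm \<alpha> f / (1 - \<alpha>)"
  define w where "w = of_real \<rho> * z"
  have fB: "f \<in> bloch_space \<alpha>"
    using f by (simp add: bloch0_def)
  have K: "0 \<le> K"
    using bloch_norm_nonneg[OF fB] \<alpha> by (simp add: K_def)
  have z0: "z \<noteq> 0" and \<rho>0: "0 < \<rho>"
    using \<rho> by auto
  have w: "w \<in> ball 0 1" "w \<noteq> 0" "cmod w = \<rho> * cmod z"
    using z \<rho> z0 by (auto simp: w_def norm_mult mult_le_cancel_right1 intro: le_less_trans[of _ "cmod z"])
  have split: "zquot f z - zquot f w = (f z - f w) / z + f w * (of_real \<rho> - 1) / w"
    using z0 w \<rho>0 by (simp add: zquot_def w_def field_simps)
  have "cmod (f z - f w) * 1 \<le> cmod (f z - f w) * (2 * cmod z)"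
    using \<rho> by (intro mult_left_mono) auto
  then have "cmod ((f z - f w) / z) \<le> 2 * cmod (f z - f w)"
    using z0 by (simp add: norm_divide divide_le_eq mult_ac)
  also have "\<dots> \<le> 2 * (K * (1 - \<rho>) powr (1 - \<alpha>))"
    using bloch_radial_hoelder[OF fB \<alpha> z, of \<rho>] \<rho> by (simp add: K_def w_def)
  finally have radial_part: "cmod ((f z - f w) / z) \<le> 2 * K * (1 - \<rho>) powr (1 - \<alpha>)"
    by simp
  have "cmod (of_real \<rho> - 1 :: complex) = 1 - \<rho>"
    using \<rho> norm_of_real[of "\<rho> - 1", where 'a=complex] by simp
  then have "cmod (f w * (of_real \<rho> - 1) / w) = cmod (f w) / cmod w * (1 - \<rho>)"
    by (simp add: norm_divide norm_mult)
  also have "\<dots> \<le> K * (1 - \<rho>)"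
  proof (rule mult_right_mono)
    show "cmod (f w) / cmod w \<le> K"
      using cmod_bloch0_le[OF f \<alpha> w(1)] w(2) by (simp add: K_def divide_le_eq)
  qed (use \<rho> in simp)
  also have "\<dots> \<le> K * (1 - \<rho>) powr (1 - \<alpha>)"
    using K \<rho> \<alpha> by (intro mult_left_mono self_le_powr) auto
  finally have "cmod (f w * (of_real \<rho> - 1) / w) \<le> K * (1 - \<rho>) powr (1 - \<alpha>)" .
  moreover have "cmod (zquot f z - zquot f w) \<le> cmod ((f z - f w) / z) + cmod (f w * (of_real \<rho> - 1) / w)"
    unfolding split by (rule norm_triangle_ineq)
  ultimately show ?thesis
    using radial_part by (simp add: K_def w_def)
qed

lemma zquot_uniformly_convergent_subseq:
  fixes fs :: "nat \<Rightarrow> complex \<Rightarrow> complex"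
  assumes \<alpha>: "0 < \<alpha>" "\<alpha> < 1"
    and fs: "\<And>n. fs n \<in> bloch0 \<alpha>" "\<And>n. bloch_norm \<alpha> (fs n) \<le> 1"
  obtains r Q where "strict_mono r" "Q holomorphic_on ball 0 1"
    "\<And>z. z \<in> ball 0 1 \<Longrightarrow> cmod (Q z) \<le> 1 / (1 - \<alpha>)"
    "uniform_limit (ball 0 1) (\<lambda>n. zquot (fs (r n))) Q sequentially"
proof -
  define M where "M = 1 / (1 - \<alpha>)"
  have fs_norm: "bloch_norm \<alpha> (fs n) / (1 - \<alpha>) \<le> M" for n
    unfolding M_def using fs(2) \<alpha> by (intro divide_right_mono) auto
  have hol: "zquot (fs n) holomorphic_on ball 0 1" for n
    using fs(1)[of n] by (intro zquot_holomorphic) (auto simp: bloch0_def bloch_space_def)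
  have bound: "cmod (zquot (fs n) z) \<le> M" if "z \<in> ball 0 1" for n z
    using cmod_zquot_le[OF fs(1) \<alpha> that] fs_norm by (rule order_trans)
  have radial: "cmod (zquot (fs n) z - zquot (fs n) (of_real \<rho> * z)) \<le> 3 * M * (1 - \<rho>) powr (1 - \<alpha>)"
    if "z \<in> ball 0 1" "\<rho> < cmod z" "1/2 \<le> \<rho>" "\<rho> < 1" for n z \<rho>
  proof -
    have "cmod (zquot (fs n) z - zquot (fs n) (of_real \<rho> * z))
            \<le> 3 * (bloch_norm \<alpha> (fs n) / (1 - \<alpha>)) * (1 - \<rho>) powr (1 - \<alpha>)"
      using that by (intro zquot_radial_estimate fs(1) \<alpha>) auto
    also have "\<dots> \<le> 3 * M * (1 - \<rho>) powr (1 - \<alpha>)"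
      using fs_norm[of n] by (intro mult_right_mono) auto
    finally show ?thesis .
  qed
  have modulus: "((\<lambda>\<rho>. 3 * M * (1 - \<rho>) powr (1 - \<alpha>)) \<longlongrightarrow> 0) (at_left 1)"
    using \<alpha> eventually_at_left_real[of 0 1]
    by (intro tendsto_mult_right_zero tendsto_zero_powrI tendsto_eq_intros)
       (auto elim!: eventually_mono)
  obtain r Q where "strict_mono r" "Q holomorphic_on ball 0 1" "\<And>z. z \<in> ball 0 1 \<Longrightarrow> cmod (Q z) \<le> M"
    "uniform_limit (ball 0 1) (\<lambda>n. zquot (fs (r n))) Q sequentially"
    using uniformly_convergent_subseq_on_disc[where q = "\<lambda>n. zquot (fs n)" and M = M,
        OF hol bound radial modulus]
    by blast
  then show ?thesis
    using that unfolding M_def by blast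
qed

section \<open>The Cesaro operator\<close>

lemma cesaro_op_eq_zquot: "cesaro_op G f z = contour_integral (linepath 0 z) (\<lambda>w. zquot f w * G w)"
proof (cases "z = 0")
  case False
  show ?thesis
    unfolding cesaro_op_def contour_integral_integral
  proof (rule integral_spike[where S = "{0}"])
    fix t assume "t \<in> {0..1} - {0::real}"
    then have "linepath 0 z t \<noteq> 0"
      using False by (simp add: linepath_def)
    then show "zquot f (linepath 0 z t) * G (linepath 0 z t) * vector_derivative (linepath 0 z) (at t)
      = f (linepath 0 z t) * G (linepath 0 z t) / linepath 0 z t * vector_derivative (linepath 0 z) (at t)"
      by (simp add: zquot_def)
  qed auto
qed (simp add: cesaro_op_def)

lemma cesaro_op_zero [simp]: "cesaro_op G f 0 = 0"
  by (simp add: cesaro_op_def)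

lemma cesaro_op_has_field_derivative:
  assumes "G holomorphic_on ball 0 1" "f holomorphic_on ball 0 1" "f 0 = 0" "z \<in> ball 0 1"
  shows "(cesaro_op G f has_field_derivative zquot f z * G z) (at z)"
  unfolding cesaro_op_eq_zquot[abs_def] using assms
  by (intro disc_primitive_has_field_derivative holomorphic_intros zquot_holomorphic)

lemma zquot_mult_contour_integrable:
  assumes "G holomorphic_on ball 0 1" "f holomorphic_on ball 0 1" "f 0 = 0" "z \<in> ball 0 1"
  shows "(\<lambda>w. zquot f w * G w) contour_integrable_on linepath 0 z"
proof (rule contour_integrable_continuous_linepath)
  have "closed_segment 0 z \<subseteq> ball 0 1"
    using assms(4) by (intro closed_segment_subset) auto
  moreover have "(\<lambda>w. zquot f w * G w) holomorphic_on ball 0 1"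
    by (intro holomorphic_intros zquot_holomorphic assms(1-3))
  ultimately show "continuous_on (closed_segment 0 z) (\<lambda>w. zquot f w * G w)"
    by (meson continuous_on_subset holomorphic_on_imp_continuous_on)
qed

lemma cesaro_op_add:
  assumes G: "G holomorphic_on ball 0 1" and f: "f \<in> bloch0 \<alpha>" and g: "g \<in> bloch0 \<alpha>"
    and z: "z \<in> ball 0 1"
  shows "cesaro_op G (\<lambda>w. f w + g w) z = cesaro_op G f z + cesaro_op G g z"
proof -
  have hol: "f holomorphic_on ball 0 1" "g holomorphic_on ball 0 1" and "f 0 = 0" "g 0 = 0"
    using f g by (auto simp: bloch0_def bloch_space_def)
  moreover have "deriv (\<lambda>w. f w + g w) 0 = deriv f 0 + deriv g 0"
    using hol by (intro deriv_add) (auto intro: holomorphic_on_imp_differentiable_at)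
  then have "(\<lambda>w. zquot (\<lambda>w. f w + g w) w * G w) = (\<lambda>w. zquot f w * G w + zquot g w * G w)"
    by (auto simp: zquot_def add_divide_distrib distrib_right)
  ultimately show ?thesis
    unfolding cesaro_op_eq_zquot
    by (simp add: contour_integral_add zquot_mult_contour_integrable[OF G _ _ z])
qed

lemma cesaro_op_cmult:
  assumes G: "G holomorphic_on ball 0 1" and f: "f \<in> bloch0 \<alpha>" and z: "z \<in> ball 0 1"
  shows "cesaro_op G (\<lambda>w. c * f w) z = c * cesaro_op G f z"
proof -
  have hol: "f holomorphic_on ball 0 1" and "f 0 = 0"
    using f by (auto simp: bloch0_def bloch_space_def)
  moreover have "deriv (\<lambda>w. c * f w) 0 = c * deriv f 0"
    using hol by (intro deriv_cmult) (auto intro: holomorphic_on_imp_differentiable_at)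
  then have "(\<lambda>w. zquot (\<lambda>w. c * f w) w * G w) = (\<lambda>w. c * (zquot f w * G w))"
    by (auto simp: zquot_def)
  ultimately show ?thesis
    unfolding cesaro_op_eq_zquot
    by (simp add: contour_integral_lmul zquot_mult_contour_integrable[OF G _ _ z])
qed

lemma cesaro_op_bloch0:
  assumes \<alpha>: "0 < \<alpha>" "\<alpha> < 1" and G: "G holomorphic_on ball 0 1"
    and B: "\<And>z. z \<in> ball 0 1 \<Longrightarrow> (1 - (cmod z)\<^sup>2) powr \<alpha> * cmod (G z) \<le> B"
    and f: "f \<in> bloch0 \<alpha>"
  shows "cesaro_op G f \<in> bloch0 \<alpha>"
    and "bloch_norm \<alpha> (cesaro_op G f) \<le> B / (1 - \<alpha>) * bloch_norm \<alpha> f"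
proof -
  have hol: "f holomorphic_on ball 0 1" "f 0 = 0"
    using f by (auto simp: bloch0_def bloch_space_def)
  have "(1 - (cmod z)\<^sup>2) powr \<alpha> * cmod (zquot f z * G z) \<le> B / (1 - \<alpha>) * bloch_norm \<alpha> f"
    if z: "z \<in> ball 0 1" for z
  proof -
    have "(1 - (cmod z)\<^sup>2) powr \<alpha> * cmod (zquot f z * G z)
            = cmod (zquot f z) * ((1 - (cmod z)\<^sup>2) powr \<alpha> * cmod (G z))"
      by (simp add: norm_mult)
    also have "\<dots> \<le> bloch_norm \<alpha> f / (1 - \<alpha>) * B"
      using cmod_zquot_le[OF f \<alpha> z] B[OF z] bloch_norm_nonneg[of f \<alpha>] f \<alpha>
      by (intro mult_mono) (auto simp: bloch0_def)
    finally show ?thesis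
      by (simp add: mult.commute)
  qed
  then show "cesaro_op G f \<in> bloch0 \<alpha>"
    and "bloch_norm \<alpha> (cesaro_op G f) \<le> B / (1 - \<alpha>) * bloch_norm \<alpha> f"
    using bloch0_of_derivative_bound[OF cesaro_op_has_field_derivative[OF G hol]] by auto
qed

lemma cesaro_op_bloch0_linear:
  assumes "0 < \<alpha>" "\<alpha> < 1" and G: "G holomorphic_on ball 0 1"
    and "\<And>z. z \<in> ball 0 1 \<Longrightarrow> (1 - (cmod z)\<^sup>2) powr \<alpha> * cmod (G z) \<le> B"
  shows "bloch0_linear \<alpha> (cesaro_op G)"
  unfolding bloch0_linear_def
  using cesaro_op_bloch0(1)[OF assms] cesaro_op_add[OF G] cesaro_op_cmult[OF G] by blast

lemma cesaro_op_minus_primitive_bloch0: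
  assumes G: "G holomorphic_on ball 0 1"
    and B: "\<And>z. z \<in> ball 0 1 \<Longrightarrow> (1 - (cmod z)\<^sup>2) powr \<alpha> * cmod (G z) \<le> B"
    and f: "f \<in> bloch0 \<alpha>" and Q: "Q holomorphic_on ball 0 1"
    and close: "\<And>z. z \<in> ball 0 1 \<Longrightarrow> cmod (zquot f z - Q z) \<le> e"
  shows "(\<lambda>z. cesaro_op G f z - contour_integral (linepath 0 z) (\<lambda>w. Q w * G w)) \<in> bloch0 \<alpha>"
    and "bloch_norm \<alpha> (\<lambda>z. cesaro_op G f z - contour_integral (linepath 0 z) (\<lambda>w. Q w * G w)) \<le> e * B"
proof -
  have hol: "f holomorphic_on ball 0 1" "f 0 = 0"
    using f by (auto simp: bloch0_def bloch_space_def)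
  have deriv: "((\<lambda>z. cesaro_op G f z - contour_integral (linepath 0 z) (\<lambda>w. Q w * G w))
          has_field_derivative (zquot f z - Q z) * G z) (at z)" if "z \<in> ball 0 1" for z
  proof -
    have "((\<lambda>z. contour_integral (linepath 0 z) (\<lambda>w. Q w * G w)) has_field_derivative Q z * G z) (at z)"
      using Q G that by (intro disc_primitive_has_field_derivative holomorphic_intros)
    then have "((\<lambda>z. cesaro_op G f z - contour_integral (linepath 0 z) (\<lambda>w. Q w * G w))
                 has_field_derivative zquot f z * G z - Q z * G z) (at z)"
      by (rule DERIV_diff[OF cesaro_op_has_field_derivative[OF G hol that]])
    then show ?thesis
      by (simp add: algebra_simps)
  qed
  have weight: "(1 - (cmod z)\<^sup>2) powr \<alpha> * cmod ((zquot f z - Q z) * G z) \<le> e * B"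
    if "z \<in> ball 0 1" for z
  proof -
    have "(1 - (cmod z)\<^sup>2) powr \<alpha> * cmod ((zquot f z - Q z) * G z)
            = cmod (zquot f z - Q z) * ((1 - (cmod z)\<^sup>2) powr \<alpha> * cmod (G z))"
      by (simp add: norm_mult)
    also have "\<dots> \<le> e * B"
      using close[OF that] B[OF that] by (intro mult_mono) (auto intro: order_trans[OF norm_ge_zero])
    finally show ?thesis .
  qed
  show "(\<lambda>z. cesaro_op G f z - contour_integral (linepath 0 z) (\<lambda>w. Q w * G w)) \<in> bloch0 \<alpha>"
    and "bloch_norm \<alpha> (\<lambda>z. cesaro_op G f z - contour_integral (linepath 0 z) (\<lambda>w. Q w * G w)) \<le> e * B"
    using bloch0_of_derivative_bound[OF deriv _ weight] by simp_all
qed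

lemma cesaro_op_tendsto_primitive:
  fixes fs :: "nat \<Rightarrow> complex \<Rightarrow> complex"
  assumes G: "G holomorphic_on ball 0 1"
    and B: "\<And>z. z \<in> ball 0 1 \<Longrightarrow> (1 - (cmod z)\<^sup>2) powr \<alpha> * cmod (G z) \<le> B"
    and fs: "\<And>n. fs n \<in> bloch0 \<alpha>" and Q: "Q holomorphic_on ball 0 1"
    and uniform: "uniform_limit (ball 0 1) (\<lambda>n. zquot (fs n)) Q sequentially"
  shows "(\<lambda>n. bloch_norm \<alpha> (\<lambda>z. cesaro_op G (fs n) z - contour_integral (linepath 0 z) (\<lambda>w. Q w * G w)))
           \<longlonglongrightarrow> 0"
proof -
  define D where "D n = (\<lambda>z. cesaro_op G (fs n) z - contour_integral (linepath 0 z) (\<lambda>w. Q w * G w))" for n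
  have small: "\<forall>\<^sub>F n in sequentially. D n \<in> bloch0 \<alpha> \<and> bloch_norm \<alpha> (D n) \<le> e * B" if "0 < e" for e
  proof -
    have "\<forall>\<^sub>F n in sequentially. \<forall>z\<in>ball 0 1. dist (zquot (fs n) z) (Q z) < e"
      using uniform that unfolding uniform_limit_iff by blast
    then show ?thesis
    proof (rule eventually_mono)
      fix n assume "\<forall>z\<in>ball 0 1. dist (zquot (fs n) z) (Q z) < e"
      then have "cmod (zquot (fs n) z - Q z) \<le> e" if "z \<in> ball 0 1" for z
        using that by (auto simp: dist_norm intro: less_imp_le)
      from cesaro_op_minus_primitive_bloch0[OF G B fs Q this]
      show "D n \<in> bloch0 \<alpha> \<and> bloch_norm \<alpha> (D n) \<le> e * B"
        by (simp add: D_def)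
    qed
  qed
  have B0: "0 \<le> B"
    using B by (rule weighted_bound_nonneg)
  have "(\<lambda>n. bloch_norm \<alpha> (D n)) \<longlonglongrightarrow> 0"
  proof (rule order_tendstoI)
    show "\<forall>\<^sub>F n in sequentially. a < bloch_norm \<alpha> (D n)" if "a < 0" for a
      using small[OF zero_less_one] by eventually_elim
        (use that in \<open>auto simp: bloch0_def dest: bloch_norm_nonneg[of _ \<alpha>]\<close>)
    show "\<forall>\<^sub>F n in sequentially. bloch_norm \<alpha> (D n) < a" if a: "0 < a" for a
    proof -
      have "a / (B + 1) * B < a"
        using a B0 by (simp add: field_simps)
      then show ?thesis
        using small[of "a / (B + 1)"] a B0 by (auto elim!: eventually_mono)
    qed
  qed
  then show ?thesis
    by (simp add: D_def)
qed

lemma cesaro_op_compact: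
  assumes \<alpha>: "0 < \<alpha>" "\<alpha> < 1" and G: "G holomorphic_on ball 0 1"
    and B: "\<And>z. z \<in> ball 0 1 \<Longrightarrow> (1 - (cmod z)\<^sup>2) powr \<alpha> * cmod (G z) \<le> B"
  shows "bloch0_compact_op \<alpha> (cesaro_op G)"
  unfolding bloch0_compact_op_def
proof (intro conjI allI impI)
  show "bloch0_linear \<alpha> (cesaro_op G)"
    using assms by (rule cesaro_op_bloch0_linear)
  fix fs :: "nat \<Rightarrow> complex \<Rightarrow> complex"
  assume "\<forall>n. fs n \<in> bloch0 \<alpha> \<and> bloch_norm \<alpha> (fs n) \<le> 1"
  then have fs: "\<And>n. fs n \<in> bloch0 \<alpha>" "\<And>n. bloch_norm \<alpha> (fs n) \<le> 1"
    by auto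
  obtain r Q where r: "strict_mono r" and Q: "Q holomorphic_on ball 0 1"
    and Q_bound: "\<And>z. z \<in> ball 0 1 \<Longrightarrow> cmod (Q z) \<le> 1 / (1 - \<alpha>)"
    and uniform: "uniform_limit (ball 0 1) (\<lambda>n. zquot (fs (r n))) Q sequentially"
    using zquot_uniformly_convergent_subseq[where fs = fs, OF \<alpha> fs] by blast
  have "(1 - (cmod z)\<^sup>2) powr \<alpha> * cmod (Q z * G z) \<le> 1 / (1 - \<alpha>) * B" if "z \<in> ball 0 1" for z
  proof -
    have "(1 - (cmod z)\<^sup>2) powr \<alpha> * cmod (Q z * G z) = cmod (Q z) * ((1 - (cmod z)\<^sup>2) powr \<alpha> * cmod (G z))"
      by (simp add: norm_mult)
    also have "\<dots> \<le> 1 / (1 - \<alpha>) * B"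
      using Q_bound[OF that] B[OF that] \<alpha> by (intro mult_mono) auto
    finally show ?thesis .
  qed
  then have "(\<lambda>z. contour_integral (linepath 0 z) (\<lambda>w. Q w * G w)) \<in> bloch0 \<alpha>"
    using Q G by (intro disc_primitive_bloch0 holomorphic_intros)
  moreover have "(\<lambda>n. bloch_norm \<alpha> (\<lambda>z. cesaro_op G (fs (r n)) z
                   - contour_integral (linepath 0 z) (\<lambda>w. Q w * G w))) \<longlonglongrightarrow> 0"
    using G B fs(1) Q uniform by (rule cesaro_op_tendsto_primitive)
  ultimately show "\<exists>r L. strict_mono r \<and> L \<in> bloch0 \<alpha> \<and>
             (\<lambda>n. bloch_norm \<alpha> (\<lambda>z. cesaro_op G (fs (r n)) z - L z)) \<longlonglongrightarrow> 0"
    using r by blast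
qed

section \<open>Essential norm of compact operators\<close>

lemma bloch0_compact_op_uminus:
  assumes "bloch0_compact_op \<alpha> K"
  shows "bloch0_compact_op \<alpha> (\<lambda>f z. - K f z)"
  unfolding bloch0_compact_op_def
proof (intro conjI allI impI)
  have lin: "bloch0_linear \<alpha> K"
    using assms by (simp add: bloch0_compact_op_def)
  then show "bloch0_linear \<alpha> (\<lambda>f z. - K f z)"
    unfolding bloch0_linear_def by (auto intro: bloch0_uminus)
  fix fs :: "nat \<Rightarrow> complex \<Rightarrow> complex"
  assume fs: "\<forall>n. fs n \<in> bloch0 \<alpha> \<and> bloch_norm \<alpha> (fs n) \<le> 1"
  then obtain r g where r: "strict_mono r" and g: "g \<in> bloch0 \<alpha>"
    and lim: "(\<lambda>n. bloch_norm \<alpha> (\<lambda>z. K (fs (r n)) z - g z)) \<longlonglongrightarrow> 0"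
    using assms unfolding bloch0_compact_op_def by blast
  have eq: "bloch_norm \<alpha> (\<lambda>z. - K (fs (r n)) z - - g z) = bloch_norm \<alpha> (\<lambda>z. K (fs (r n)) z - g z)" for n
  proof -
    have "K (fs (r n)) \<in> bloch0 \<alpha>"
      using lin fs by (simp add: bloch0_linear_def)
    then have "(\<lambda>z. K (fs (r n)) z - g z) holomorphic_on ball 0 1"
      using g by (auto intro!: holomorphic_intros dest: bloch0_holomorphic)
    then show ?thesis
      using bloch_norm_uminus[of "\<lambda>z. K (fs (r n)) z - g z" \<alpha>] by simp
  qed
  have "(\<lambda>n. bloch_norm \<alpha> (\<lambda>z. - K (fs (r n)) z - - g z)) \<longlonglongrightarrow> 0"
    using lim by (simp only: eq)
  then show "\<exists>r g. strict_mono r \<and> g \<in> bloch0 \<alpha> \<and>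
               (\<lambda>n. bloch_norm \<alpha> (\<lambda>z. - K (fs (r n)) z - g z)) \<longlonglongrightarrow> 0"
    using r bloch0_uminus[OF g] by blast
qed

lemma bloch0_compact_op_bounded:
  assumes K: "bloch0_compact_op \<alpha> K"
  obtains C where "\<And>f. f \<in> bloch0 \<alpha> \<Longrightarrow> bloch_norm \<alpha> f \<le> 1 \<Longrightarrow> bloch_norm \<alpha> (K f) \<le> C"
proof (rule ccontr)
  assume "\<not> thesis"
  with that have "\<forall>n::nat. \<exists>f. (f \<in> bloch0 \<alpha> \<and> bloch_norm \<alpha> f \<le> 1) \<and> real n < bloch_norm \<alpha> (K f)"
    by (meson not_le)
  then obtain fs where fs: "\<forall>n. fs n \<in> bloch0 \<alpha> \<and> bloch_norm \<alpha> (fs n) \<le> 1"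
    and large: "\<And>n. real n < bloch_norm \<alpha> (K (fs n))"
    by metis
  then obtain r g where r: "strict_mono r" and g: "g \<in> bloch0 \<alpha>"
    and lim: "(\<lambda>n. bloch_norm \<alpha> (\<lambda>z. K (fs (r n)) z - g z)) \<longlonglongrightarrow> 0"
    using K unfolding bloch0_compact_op_def by blast
  have "\<forall>\<^sub>F n in sequentially.
          bloch_norm \<alpha> (\<lambda>z. K (fs (r n)) z - g z) < 1 \<and> bloch_norm \<alpha> g + 1 \<le> real n"
    using order_tendstoD(2)[OF lim zero_less_one] eventually_ge_at_top[of "nat \<lceil>bloch_norm \<alpha> g + 1\<rceil>"]
    by eventually_elim (meson real_nat_ceiling_ge of_nat_le_iff order_trans)
  then obtain n where n: "bloch_norm \<alpha> (\<lambda>z. K (fs (r n)) z - g z) < 1" "bloch_norm \<alpha> g + 1 \<le> real n"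
    using eventually_happens'[OF sequentially_bot] by blast
  have Kf: "K (fs (r n)) \<in> bloch_space \<alpha>" and gB: "g \<in> bloch_space \<alpha>"
    using K fs g by (auto simp: bloch0_compact_op_def bloch0_linear_def bloch0_def)
  have "bloch_norm \<alpha> (K (fs (r n))) = bloch_norm \<alpha> (\<lambda>z. (K (fs (r n)) z - g z) + g z)"
    by simp
  also have "\<dots> \<le> bloch_norm \<alpha> (\<lambda>z. K (fs (r n)) z - g z) + bloch_norm \<alpha> g"
    using bloch_space_add(2)[OF bloch_space_diff[OF Kf gB] gB] .
  also have "\<dots> < real n"
    using n by simp
  also have "\<dots> \<le> real (r n)"
    using seq_suble[OF r] by simp
  finally show False
    using large[of "r n"] by simp
qed

lemma bloch0_op_norm_nonneg:
  assumes into: "\<And>f. f \<in> bloch0 \<alpha> \<Longrightarrow> T f \<in> bloch0 \<alpha>"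
    and bounded: "\<And>f. f \<in> bloch0 \<alpha> \<Longrightarrow> bloch_norm \<alpha> f \<le> 1 \<Longrightarrow> bloch_norm \<alpha> (T f) \<le> C"
  shows "0 \<le> bloch0_op_norm \<alpha> T"
proof -
  have zero: "(\<lambda>z. 0) \<in> {f \<in> bloch0 \<alpha>. bloch_norm \<alpha> f \<le> 1}"
    using zero_in_bloch0 by simp
  have "0 \<le> bloch_norm \<alpha> (T (\<lambda>z. 0))"
    using into[OF zero_in_bloch0] by (intro bloch_norm_nonneg) (simp add: bloch0_def)
  also have "\<dots> \<le> bloch0_op_norm \<alpha> T"
    unfolding bloch0_op_norm_def using zero bounded by (intro cSUP_upper bdd_aboveI2) auto
  finally show ?thesis .
qed

lemma bloch0_compact_op_ess_norm_eq_0: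
  assumes T: "bloch0_compact_op \<alpha> T"
  shows "bloch0_ess_norm \<alpha> T = 0"
proof -
  let ?compact = "{K. bloch0_compact_op \<alpha> K}"
  have into: "f \<in> bloch0 \<alpha> \<Longrightarrow> K f \<in> bloch0 \<alpha>" if "K \<in> ?compact" for K f
    using that by (simp add: bloch0_compact_op_def bloch0_linear_def)
  obtain C where C: "\<And>f. f \<in> bloch0 \<alpha> \<Longrightarrow> bloch_norm \<alpha> f \<le> 1 \<Longrightarrow> bloch_norm \<alpha> (T f) \<le> C"
    using bloch0_compact_op_bounded[OF T] by blast
  \<comment> \<open>\<open>bloch0_op_norm\<close> is a real SUP, meaningful only for operators bounded on the unit ball\<close>
  have "0 \<le> bloch0_op_norm \<alpha> (\<lambda>f z. T f z + K f z)" if K: "K \<in> ?compact" for K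
  proof -
    obtain C' where C': "\<And>f. f \<in> bloch0 \<alpha> \<Longrightarrow> bloch_norm \<alpha> f \<le> 1 \<Longrightarrow> bloch_norm \<alpha> (K f) \<le> C'"
      using bloch0_compact_op_bounded K by blast
    have sum: "(\<lambda>z. T f z + K f z) \<in> bloch_space \<alpha>"
      "bloch_norm \<alpha> (\<lambda>z. T f z + K f z) \<le> bloch_norm \<alpha> (T f) + bloch_norm \<alpha> (K f)"
      if "f \<in> bloch0 \<alpha>" for f
      using bloch_space_add into[OF K that] into[OF _ that] T by (auto simp: bloch0_def)
    show ?thesis
    proof (rule bloch0_op_norm_nonneg)
      show "(\<lambda>z. T f z + K f z) \<in> bloch0 \<alpha>" if "f \<in> bloch0 \<alpha>" for f
        using sum(1)[OF that] into[OF K that] into[OF _ that] T by (simp add: bloch0_def)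
      show "bloch_norm \<alpha> (\<lambda>z. T f z + K f z) \<le> C + C'"
        if "f \<in> bloch0 \<alpha>" "bloch_norm \<alpha> f \<le> 1" for f
        using sum(2)[OF that(1)] C[OF that] C'[OF that] by simp
    qed
  qed
  moreover have "bloch0_op_norm \<alpha> (\<lambda>f z. T f z + - T f z) = 0"
  proof -
    have "{f \<in> bloch0 \<alpha>. bloch_norm \<alpha> f \<le> 1} \<noteq> {}"
      using zero_in_bloch0 by fastforce
    then show ?thesis
      by (simp add: bloch0_op_norm_def)
  qed
  moreover have "(\<lambda>f z. - T f z) \<in> ?compact"
    using T by (simp add: bloch0_compact_op_uminus)
  ultimately show ?thesis
    unfolding bloch0_ess_norm_def
    by (intro antisym cINF_greatest) (auto intro!: cINF_lower2 bdd_belowI2)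
qed

section \<open>The symbol\<close>

lemma one_minus_mult_in_disc:
  fixes b w :: complex
  assumes "cmod b \<le> 1" "cmod w < 1"
  shows "0 < Re (1 - b * w)" "1 - cmod w \<le> cmod (1 - b * w)"
proof -
  have "cmod (b * w) \<le> cmod w"
    using assms by (simp add: norm_mult mult_left_le_one_le)
  moreover have "Re (b * w) \<le> cmod (b * w)"
    by (rule complex_Re_le_cmod)
  moreover have "1 - cmod (b * w) \<le> cmod (1 - b * w)"
    using norm_triangle_ineq2[of 1 "b * w"] by simp
  ultimately show "0 < Re (1 - b * w)" "1 - cmod w \<le> cmod (1 - b * w)"
    using assms by auto
qed

lemma weighted_pole_le:
  fixes b z c :: complex
  assumes b: "cmod b \<le> 1" and z: "z \<in> ball 0 1" and \<beta>: "0 \<le> \<beta>"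
  shows "(1 - (cmod z)\<^sup>2) powr \<beta> * cmod (c / (1 - b * z) powr complex_of_real \<beta>) \<le> 2 powr \<beta> * cmod c"
proof -
  define d where "d = cmod (1 - b * z)"
  have d: "1 - cmod z \<le> d"
    using one_minus_mult_in_disc(2)[of b z] b z by (auto simp: d_def)
  then have d0: "0 < d"
    using z by simp
  have "1 - (cmod z)\<^sup>2 = (1 - cmod z) * (1 + cmod z)"
    by (simp add: power2_eq_square algebra_simps)
  also have "\<dots> \<le> (1 - cmod z) * 2"
    using z by (intro mult_left_mono) auto
  also have "\<dots> \<le> 2 * d"
    using d by simp
  finally have "(1 - (cmod z)\<^sup>2) powr \<beta> \<le> (2 * d) powr \<beta>"
    using z \<beta> by (intro powr_mono2) (auto simp: abs_square_le_1)
  also have "\<dots> = 2 powr \<beta> * d powr \<beta>"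
    using d0 by (simp add: powr_mult)
  finally have "(1 - (cmod z)\<^sup>2) powr \<beta> * (cmod c / d powr \<beta>) \<le> 2 powr \<beta> * d powr \<beta> * (cmod c / d powr \<beta>)"
    by (intro mult_right_mono) auto
  also have "\<dots> = 2 powr \<beta> * cmod c"
    using d0 by simp
  finally show ?thesis
    by (simp add: norm_divide norm_powr_real_powr' d_def)
qed

lemma g_sym_holomorphic:
  assumes "\<forall>j<k. cmod (b j) = 1" "h holomorphic_on ball 0 1"
  shows "g_sym k a b h \<beta> holomorphic_on ball 0 1"
proof -
  have pole_terms: "(\<lambda>w. a j / (1 - b j * w) powr complex_of_real \<beta>) holomorphic_on ball 0 1"
    if "j < k" for j
  proof (intro holomorphic_intros)
    fix w :: complex assume "w \<in> ball 0 1"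
    then have "0 < Re (1 - b j * w)"
      using one_minus_mult_in_disc(1)[of "b j" w] assms(1) that by auto
    then show "1 - b j * w \<notin> \<real>\<^sub>\<le>\<^sub>0"
      by (auto simp: complex_nonpos_Reals_iff)
    then show "(1 - b j * w) powr complex_of_real \<beta> \<noteq> 0"
      by (auto simp: powr_def)
  qed
  then show ?thesis
    unfolding g_sym_def by (intro holomorphic_intros pole_terms assms(2)) auto
qed

lemma g_sym_weighted_bound:
  assumes b: "\<forall>j<k. cmod (b j) = 1" and h: "bounded (h ` ball 0 1)" and \<beta>: "0 \<le> \<beta>"
  obtains B where "\<And>z. z \<in> ball 0 1 \<Longrightarrow> (1 - (cmod z)\<^sup>2) powr \<beta> * cmod (g_sym k a b h \<beta> z) \<le> B"
proof -
  obtain H where H: "\<And>z. z \<in> ball 0 1 \<Longrightarrow> cmod (h z) \<le> H"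
    using h unfolding bounded_iff by (metis image_eqI)
  have "(1 - (cmod z)\<^sup>2) powr \<beta> * cmod (g_sym k a b h \<beta> z)
          \<le> (\<Sum>j<k. 2 powr \<beta> * cmod (a j)) + max H 0" if z: "z \<in> ball 0 1" for z
  proof -
    define w where "w = (1 - (cmod z)\<^sup>2) powr \<beta>"
    have w: "0 \<le> w" "w \<le> 1"
      unfolding w_def using z \<beta> by (auto intro!: powr_le1 simp: abs_square_le_1 power_le_one)
    have "w * cmod (g_sym k a b h \<beta> z)
          \<le> w * ((\<Sum>j<k. cmod (a j / (1 - b j * z) powr complex_of_real \<beta>)) + cmod (h z))"
      unfolding g_sym_def using w
      by (intro mult_left_mono order.trans[OF norm_triangle_ineq] add_right_mono norm_sum) auto
    also have "\<dots> = (\<Sum>j<k. w * cmod (a j / (1 - b j * z) powr complex_of_real \<beta>)) + w * cmod (h z)"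
      by (simp add: distrib_left sum_distrib_left)
    also have "\<dots> \<le> (\<Sum>j<k. 2 powr \<beta> * cmod (a j)) + max H 0"
    proof (rule add_mono)
      show "(\<Sum>j<k. w * cmod (a j / (1 - b j * z) powr complex_of_real \<beta>)) \<le> (\<Sum>j<k. 2 powr \<beta> * cmod (a j))"
        unfolding w_def using b z \<beta> by (intro sum_mono weighted_pole_le) auto
      have "w * cmod (h z) \<le> 1 * cmod (h z)"
        using w by (intro mult_right_mono) auto
      then show "w * cmod (h z) \<le> max H 0"
        using H[OF z] by simp
    qed
    finally show ?thesis
      by (simp add: w_def)
  qed
  then show ?thesis
    by (rule that)
qed

theorem corollary4p2:
  fixes \<alpha> :: real and k :: nat and a b :: "nat \<Rightarrow> complex" and h :: "complex \<Rightarrow> complex"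
  assumes "0 < \<alpha>" and "\<alpha> < 1"
    and "k \<ge> 1"
    and "\<forall>j<k. cmod (b j) = 1"
    and "inj_on b {..<k}"
    and "\<forall>j<k. a j \<noteq> 0"
    and "h holomorphic_on ball 0 1" and "bounded (h ` ball 0 1)"
  shows "bloch0_bounded_op \<alpha> (cesaro_op (g_sym k a b h \<alpha>)) \<and>
         bloch0_ess_norm \<alpha> (cesaro_op (g_sym k a b h \<alpha>)) = 0"
proof -
  have \<alpha>: "0 < \<alpha>" "\<alpha> < 1"
    using assms(1,2) .
  have G: "g_sym k a b h \<alpha> holomorphic_on ball 0 1"
    using assms(4,7) by (rule g_sym_holomorphic)
  obtain B where B: "\<And>z. z \<in> ball 0 1 \<Longrightarrow> (1 - (cmod z)\<^sup>2) powr \<alpha> * cmod (g_sym k a b h \<alpha> z) \<le> B"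
    using g_sym_weighted_bound[OF assms(4,8)] assms(1) by (metis less_eq_real_def)
  have "bloch0_bounded_op \<alpha> (cesaro_op (g_sym k a b h \<alpha>))"
    unfolding bloch0_bounded_op_def
    using cesaro_op_bloch0_linear[OF \<alpha> G B] cesaro_op_bloch0(2)[OF \<alpha> G B] by blast
  moreover have "bloch0_ess_norm \<alpha> (cesaro_op (g_sym k a b h \<alpha>)) = 0"
    using cesaro_op_compact[OF \<alpha> G B] by (rule bloch0_compact_op_ess_norm_eq_0)
  ultimately show ?thesis ..
qed

end
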